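(* Let $s\ge0$, $p\in[1,+\infty)$, $\beta\in\left[-s,\frac dp-s\right]\setminus\{0\}$ and $f\in B^{s,\infty}_p(\mathbb R^d)$. Then $\dim_{\mathcal H}\big(\mathcal E^-(\beta,f)\big)\le d-sp-\beta p$. (The wavelets are not assumed to be compactly supported.)
   Context: Standing setup. $(V_j)_{j\in\mathbb Z}$ is an orthogonal multiresolution analysis of $L^2(\mathbb R^d)$ with scaling function $\varphi$ (the integer translates of $\varphi$ form an orthonormal basis of $V_0$), and $\psi^{(1)},\dots,\psi^{(2^d-1)}$ are associated wavelets: the functions $2^{dj/2}\psi^{(i)}(2^j\cdot-k)$, $i\in\{1,\dots,2^d-1\}$, $j\in\mathbb Z$, $k\in\mathbb Z^d$, form an orthonormal basis of $L^2(\mathbb R^d)$. The functions $\varphi,\psi^{(i)}$ are smooth (at least $\lfloor s\rfloor+1$ continuous derivatives), and they and these derivatives have fast decay: for every $N\ge0$ there is $C_N$ with $|\psi^{(i)}(x)|\le C_N(1+\|x\|)^{-N}$ for all $x$. $\|\cdot\|$ is the supremum norm on $\mathbb R^d$. For $j\ge0$ and $k\in\mathbb Z^d$, the dyadic cube $\lambda=(j,k)$ is $\prod_{m=1}^d[k_m2^{-j},(k_m+1)2^{-j})$; $\Lambda_j$ is the set of dyadic cubes of generation $j$; $\psi^{(i)}_\lambda(x)=\psi^{(i)}(2^jx-k)$. For $f$ in $L^p(\mathbb R^d)$ set $C_k=\int\overline{\varphi(x-k)}f(x)\,dx$ and $c^{(i)}_\lambda=2^{dj}\int\overline{\psi^{(i)}_\lambda(x)}f(x)\,dx$.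 Define $Q_lf(x)=\sum_{i}\sum_{\lambda\in\Lambda_l}c^{(i)}_\lambda\psi^{(i)}_\lambda(x)$, $P_jf(x)=\sum_kC_k\varphi(x-k)+\sum_{0\le l<j}Q_lf(x)$, and, when $(P_jf(x))_j$ converges, $R_jf(x)=\sum_{l\ge j}Q_lf(x)$. The Besov space $B^{s,q}_p(\mathbb R^d)$ consists of those $f$ with $(C_k)\in\ell^p$ and $(\varepsilon_j)_{j\ge0}\in\ell^q$, where $\varepsilon_j=2^{(s-d/p)j}\big(\sum_i\sum_{\lambda\in\Lambda_j}|c^{(i)}_\lambda|^p\big)^{1/p}$; its norm is $\|(C_k)\|_{\ell^p}+\|(\varepsilon_j)\|_{\ell^q}$. Level set (with $\log0=-\infty$): for $\beta>0$, $\mathcal E^-(\beta,f)=\{x:\limsup_j\frac{\log|P_jf(x)|}{j\log2}\ge\beta\}$; for $\beta<0$, $\mathcal E^-(\beta,f)=\{x:(P_jf(x))_j\text{ converges and }\limsup_j\frac{\log|R_jf(x)|}{j\log2}\ge\beta\}$. $\dim_{\mathcal H}$ is Hausdorff dimension. *)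

theory Defs
  imports "HOL-Analysis.Analysis"
begin

type_synonym 'n fn = "real^'n \<Rightarrow> complex"

section \<open>Lattice points and L^p spaces on R^d (d = CARD('n))\<close>

definition ofZ :: "int^'n \<Rightarrow> real^'n" where
  "ofZ k = (\<chi> i. real_of_int (k $ i))"

definition Lp :: "real \<Rightarrow> ('n::finite) fn set" where
  "Lp p = {f. f \<in> borel_measurable lborel \<and> integrable lborel (\<lambda>x. cmod (f x) powr p)}"

definition L2 :: "('n::finite) fn set" where
  "L2 = {f. f \<in> borel_measurable lborel \<and> integrable lborel (\<lambda>x. (cmod (f x))\<^sup>2)}"

definition l2_inner :: "('n::finite) fn \<Rightarrow> 'n fn \<Rightarrow> complex" where
  "l2_inner f g = (LINT x|lborel. f x * cnj (g x))"

definition l2_norm :: "('n::finite) fn \<Rightarrow> real" where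
  "l2_norm f = sqrt (LINT x|lborel. (cmod (f x))\<^sup>2)"

definition closed_L2_subspace :: "('n::finite) fn set \<Rightarrow> bool" where
  "closed_L2_subspace S \<longleftrightarrow>
     S \<subseteq> L2 \<and> (\<lambda>x. 0) \<in> S \<and>
     (\<forall>f\<in>S. \<forall>g\<in>S. (\<lambda>x. f x + g x) \<in> S) \<and>
     (\<forall>f\<in>S. \<forall>c. (\<lambda>x. c * f x) \<in> S) \<and>
     (\<forall>f\<in>S. \<forall>g\<in>L2. (AE x in lborel. f x = g x) \<longrightarrow> g \<in> S) \<and>
     (\<forall>u g. (\<forall>n::nat. u n \<in> S) \<and> g \<in> L2 \<and>
            (\<lambda>n. l2_norm (\<lambda>x. u n x - g x)) \<longlonglongrightarrow> 0 \<longrightarrow> g \<in> S)"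

definition ONB_of :: "'i set \<Rightarrow> ('i \<Rightarrow> ('n::finite) fn) \<Rightarrow> 'n fn set \<Rightarrow> bool" where
  "ONB_of I e S \<longleftrightarrow>
     (\<forall>a\<in>I. e a \<in> S) \<and>
     (\<forall>a\<in>I. \<forall>b\<in>I. l2_inner (e a) (e b) = (if a = b then 1 else 0)) \<and>
     (\<forall>g\<in>S. (\<forall>a\<in>I. l2_inner g (e a) = 0) \<longrightarrow> (AE x in lborel. g x = 0))"

definition wav_index :: "'n::finite itself \<Rightarrow> nat set" where
  "wav_index _ = {1..2 ^ CARD('n) - 1}"

definition orth_MRA_wavelets ::
  "(int \<Rightarrow> ('n::finite) fn set) \<Rightarrow> 'n fn \<Rightarrow> (nat \<Rightarrow> 'n fn) \<Rightarrow> bool" where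
  "orth_MRA_wavelets V \<phi> \<psi> \<longleftrightarrow>
     (\<forall>j. closed_L2_subspace (V j)) \<and>
     (\<forall>j. V j \<subseteq> V (j + 1)) \<and>
     (\<forall>j f. f \<in> V j \<longleftrightarrow> (\<lambda>x. f (2 *\<^sub>R x)) \<in> V (j + 1)) \<and>
     (\<forall>g\<in>L2. \<forall>e>0. \<exists>j. \<exists>h\<in>V j. l2_norm (\<lambda>x. g x - h x) < e) \<and>
     (\<forall>g. (\<forall>j. g \<in> V j) \<longrightarrow> (AE x in lborel. g x = 0)) \<and>
     ONB_of UNIV (\<lambda>k x. \<phi> (x - ofZ k)) (V 0) \<and>
     (\<forall>i\<in>wav_index TYPE('n). \<psi> i \<in> V 1 \<and> (\<forall>g\<in>V 0. l2_inner (\<psi> i) g = 0)) \<and>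
     ONB_of (wav_index TYPE('n) \<times> (UNIV :: int set) \<times> (UNIV :: (int^'n) set))
       (\<lambda>(i, j, k) x. complex_of_real (2 powr (real CARD('n) * real_of_int j / 2))
                       * \<psi> i (2 powr (real_of_int j) *\<^sub>R x - ofZ k))
       L2"

definition fast_decay :: "('n::finite) fn \<Rightarrow> bool" where
  "fast_decay g \<longleftrightarrow> (\<forall>N::real. N \<ge> 0 \<longrightarrow>
      (\<exists>C. \<forall>x. cmod (g x) \<le> C * (1 + infnorm x) powr (- N)))"

fun smooth_decay :: "nat \<Rightarrow> ('n::finite) fn \<Rightarrow> bool" where
  "smooth_decay 0 g = (continuous_on UNIV g \<and> fast_decay g)"
| "smooth_decay (Suc m) g = (continuous_on UNIV g \<and> fast_decay g \<and>
     (\<forall>i. \<exists>g'. (\<forall>x. ((\<lambda>t. g (x + t *\<^sub>R axis i 1)) has_vector_derivative g' x) (at 0))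
               \<and> smooth_decay m g'))"

definition scal_coef :: "('n::finite) fn \<Rightarrow> 'n fn \<Rightarrow> int^'n \<Rightarrow> complex" where
  "scal_coef \<phi> f k = (LINT x|lborel. cnj (\<phi> (x - ofZ k)) * f x)"

definition wav_coef :: "(nat \<Rightarrow> ('n::finite) fn) \<Rightarrow> 'n fn \<Rightarrow> nat \<Rightarrow> nat \<Rightarrow> int^'n \<Rightarrow> complex" where
  "wav_coef \<psi> f i j k = of_real (2 ^ (CARD('n) * j)) *
      (LINT x|lborel. cnj (\<psi> i ((2::real) ^ j *\<^sub>R x - ofZ k)) * f x)"

definition Qop :: "(nat \<Rightarrow> ('n::finite) fn) \<Rightarrow> nat \<Rightarrow> 'n fn \<Rightarrow> real^'n \<Rightarrow> complex" where
  "Qop \<psi> l f x = (\<Sum>i\<in>wav_index TYPE('n).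
      infsum (\<lambda>k. wav_coef \<psi> f i l k * \<psi> i ((2::real) ^ l *\<^sub>R x - ofZ k)) UNIV)"

definition Pop :: "('n::finite) fn \<Rightarrow> (nat \<Rightarrow> 'n fn) \<Rightarrow> nat \<Rightarrow> 'n fn \<Rightarrow> real^'n \<Rightarrow> complex" where
  "Pop \<phi> \<psi> j f x = infsum (\<lambda>k. scal_coef \<phi> f k * \<phi> (x - ofZ k)) UNIV
      + (\<Sum>l<j. Qop \<psi> l f x)"

text \<open>Meaningful when the sequence of Pop values converges (= summability of the Qop's).\<close>
definition Rop :: "(nat \<Rightarrow> ('n::finite) fn) \<Rightarrow> nat \<Rightarrow> 'n fn \<Rightarrow> real^'n \<Rightarrow> complex" where
  "Rop \<psi> j f x = (\<Sum>n. Qop \<psi> (j + n) f x)"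

definition besov_eps :: "(nat \<Rightarrow> ('n::finite) fn) \<Rightarrow> real \<Rightarrow> real \<Rightarrow> 'n fn \<Rightarrow> nat \<Rightarrow> real" where
  "besov_eps \<psi> s p f j = 2 powr ((s - real CARD('n) / p) * real j) *
     (infsum (\<lambda>(i, k). cmod (wav_coef \<psi> f i j k) powr p) (wav_index TYPE('n) \<times> UNIV)) powr (1 / p)"

definition besov_inf :: "('n::finite) fn \<Rightarrow> (nat \<Rightarrow> 'n fn) \<Rightarrow> real \<Rightarrow> real \<Rightarrow> 'n fn set" where
  "besov_inf \<phi> \<psi> s p = {f. f \<in> Lp p \<and>
      (\<lambda>k. cmod (scal_coef \<phi> f k) powr p) summable_on UNIV \<and>
      (\<forall>j. (\<lambda>(i, k). cmod (wav_coef \<psi> f i j k) powr p) summable_on (wav_index TYPE('n) \<times> UNIV)) \<and>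
      bounded (range (besov_eps \<psi> s p f))}"

definition logE :: "real \<Rightarrow> ereal" where
  "logE y = (if y = 0 then -\<infinity> else ereal (ln y))"

definition Eminus :: "('n::finite) fn \<Rightarrow> (nat \<Rightarrow> 'n fn) \<Rightarrow> real \<Rightarrow> 'n fn \<Rightarrow> (real^'n) set" where
  "Eminus \<phi> \<psi> \<beta> f =
     (if \<beta> > 0 then
        {x. limsup (\<lambda>j. logE (cmod (Pop \<phi> \<psi> j f x)) / ereal (real j * ln 2)) \<ge> ereal \<beta>}
      else
        {x. convergent (\<lambda>j. Pop \<phi> \<psi> j f x) \<and>
            limsup (\<lambda>j. logE (cmod (Rop \<psi> j f x)) / ereal (real j * ln 2)) \<ge> ereal \<beta>})"

definition hausdorff_pre :: "real \<Rightarrow> real \<Rightarrow> 'a::metric_space set \<Rightarrow> ennreal" where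
  "hausdorff_pre t \<delta> E =
     (INF U \<in> {U :: nat \<Rightarrow> 'a set. E \<subseteq> (\<Union>n. U n) \<and> (\<forall>n. bounded (U n) \<and> diameter (U n) \<le> \<delta>)}.
        \<Sum>n. ennreal (diameter (U n) powr t))"

definition hausdorff_measure :: "real \<Rightarrow> 'a::metric_space set \<Rightarrow> ennreal" where
  "hausdorff_measure t E = (SUP \<delta> \<in> {0<..}. hausdorff_pre t \<delta> E)"

definition hausdorff_dim :: "'a::metric_space set \<Rightarrow> real" where
  "hausdorff_dim E = Inf {t. t \<ge> 0 \<and> hausdorff_measure t E = 0}"

end

theory Submission
  imports Defs
begin

text \<open>Write \<open>Q\<^sub>l f(x) = \<Sum>\<^sub>i\<^sub>,\<^sub>k c\<^sub>l\<^sub>i\<^sub>k \<psi>\<^sub>i(2\<^sup>l x - k)\<close>. Fast decay of the wavelets bounds \<open>|Q\<^sub>l f(x)|\<close> by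
  a constant times the envelope \<open>\<Sum>\<^sub>i\<^sub>,\<^sub>k |c\<^sub>l\<^sub>i\<^sub>k| w(2\<^sup>l x - k)\<^sup>-\<^sup>b\<close>, where \<open>w(z) = \<Prod>\<^sub>j (1 + |z\<^sub>j|)\<close>.
  If \<open>x\<close> is in the level set, then \<open>P\<^sub>j f(x)\<close> grows (for \<open>\<beta> > 0\<close>) or \<open>R\<^sub>j f(x)\<close> decays (for \<open>\<beta> < 0\<close>)
  at exponential rate at least \<open>\<beta>\<close>, so for every \<open>\<gamma> < \<beta>\<close> the envelope exceeds \<open>2\<^sup>\<gamma>\<^sup>l\<close> at \<open>x\<close> for
  infinitely many \<open>l\<close>. As the weights are summable over the lattice, this forces a single coefficient
  with \<open>|c\<^sub>l\<^sub>i\<^sub>k| \<ge> const 2\<^sup>\<gamma>\<^sup>l w(2\<^sup>l x - k)\<^sup>t\<^sup>/\<^sup>p\<close>, i.e. \<open>x\<close> lies in the ball around \<open>2\<^sup>-\<^sup>l k\<close> of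
  radius \<open>2\<^sup>-\<^sup>l (const 2\<^sup>-\<^sup>\<gamma>\<^sup>l |c\<^sub>l\<^sub>i\<^sub>k|)\<^sup>p\<^sup>/\<^sup>t\<close>. The \<open>t\<close>-dimensional cost of these balls at level \<open>l\<close> is
  a constant times \<open>2\<^sup>-\<^sup>l\<^sup>(\<^sup>t\<^sup>+\<^sup>\<gamma>\<^sup>p\<^sup>) \<Sum> |c\<^sub>l\<^sub>i\<^sub>k|\<^sup>p\<close>, which by the Besov bound is of order
  \<open>2\<^sup>l\<^sup>(\<^sup>d\<^sup>-\<^sup>s\<^sup>p\<^sup>-\<^sup>\<gamma>\<^sup>p\<^sup>-\<^sup>t\<^sup>)\<close>, summable as soon as \<open>t > d - sp - \<gamma>p\<close>. Hence the level set has
  \<open>t\<close>-dimensional Hausdorff measure zero for every \<open>t > d - sp - \<beta>p\<close>.\<close>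

section \<open>Sums over the integer lattice\<close>

lemma summable_on_inverse_square_int:
  "(\<lambda>n::int. 1 / (1 + \<bar>real_of_int n\<bar>)^2) summable_on UNIV"
proof -
  let ?z = "\<lambda>n::int. 1 / (1 + \<bar>real_of_int n\<bar>)^2"
  have nat: "(\<lambda>n::nat. 1 / (1 + real n)^2) summable_on UNIV"
  proof -
    have "summable (\<lambda>n::nat. inverse (real (Suc n) ^ 2))"
      using summable_Suc_iff[of "\<lambda>n::nat. inverse (real n ^ 2)"] inverse_power_summable[of 2]
      by simp
    thus ?thesis
      by (subst summable_on_UNIV_nonneg_real_iff) (auto simp: field_simps add.commute)
  qed
  have "(UNIV::int set) = range int \<union> range (\<lambda>n. - int n - 1)"
  proof (intro set_eqI iffI)
    fix x :: int
    show "x \<in> range int \<union> range (\<lambda>n. - int n - 1)"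
      by (cases "x \<ge> 0") (auto intro: image_eqI[of _ _ "nat x"] image_eqI[of _ _ "nat (- x - 1)"])
  qed simp
  moreover have "?z summable_on range int"
    by (subst summable_on_reindex) (auto simp: o_def intro: nat)
  moreover have "?z summable_on range (\<lambda>n. - int n - 1)"
  proof (subst summable_on_reindex)
    show "(?z \<circ> (\<lambda>n. - int n - 1)) summable_on UNIV"
      by (rule summable_on_comparison_test[OF nat])
         (auto simp: divide_simps power2_eq_square intro!: mult_mono)
  qed (auto simp: inj_on_def)
  moreover have "range int \<inter> range (\<lambda>n. - int n - 1) = {}"
    by auto
  ultimately show ?thesis
    by (metis summable_on_Un_disjoint)
qed

definition inverse_square_sum :: real where
  "inverse_square_sum = (\<Sum>\<^sub>\<infinity>n::int. 1 / (1 + \<bar>real_of_int n\<bar>)^2)"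

lemma inverse_square_shift_le:
  fixes c :: real and m :: int
  shows "1 / (1 + \<bar>c - real_of_int m\<bar>)^2 \<le> 4 * (1 / (1 + \<bar>real_of_int (m - \<lfloor>c\<rfloor>)\<bar>)^2)"
proof -
  let ?n = "real_of_int (m - \<lfloor>c\<rfloor>)"
  have "real_of_int \<lfloor>c\<rfloor> \<le> c" "c < real_of_int \<lfloor>c\<rfloor> + 1"
    by linarith+
  hence "1 + \<bar>?n\<bar> \<le> 2 * (1 + \<bar>c - real_of_int m\<bar>)"
    unfolding of_int_diff by (cases "m \<le> \<lfloor>c\<rfloor>") (simp_all add: abs_if, linarith+)
  hence "(1 + \<bar>?n\<bar>)^2 \<le> (2 * (1 + \<bar>c - real_of_int m\<bar>))^2"
    by (intro power_mono) auto
  hence "4 / (2 * (1 + \<bar>c - real_of_int m\<bar>))^2 \<le> 4 / (1 + \<bar>?n\<bar>)^2"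
    by (intro divide_left_mono) auto
  moreover have "4 / (2 * (1 + \<bar>c - real_of_int m\<bar>))^2 = 1 / (1 + \<bar>c - real_of_int m\<bar>)^2"
    by (simp only: power_mult_distrib) simp
  ultimately show ?thesis
    by simp
qed

lemma
  fixes c :: real
  shows summable_on_inverse_square_shift:
      "(\<lambda>m::int. 1 / (1 + \<bar>c - real_of_int m\<bar>)^2) summable_on UNIV"
    and infsum_inverse_square_shift_le:
      "(\<Sum>\<^sub>\<infinity>m::int. 1 / (1 + \<bar>c - real_of_int m\<bar>)^2) \<le> 4 * inverse_square_sum"
    and infsum_inverse_square_shift_pos:
      "(\<Sum>\<^sub>\<infinity>m::int. 1 / (1 + \<bar>c - real_of_int m\<bar>)^2) > 0"
proof -
  let ?g = "\<lambda>m::int. 4 * (1 / (1 + \<bar>real_of_int (m - \<lfloor>c\<rfloor>)\<bar>)^2)"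
  have bij: "bij_betw (\<lambda>m::int. m - \<lfloor>c\<rfloor>) UNIV UNIV"
    by (rule bij_betwI[of _ _ _ "\<lambda>m. m + \<lfloor>c\<rfloor>"]) auto
  have shifted: "(\<lambda>m::int. 1 / (1 + \<bar>real_of_int (m - \<lfloor>c\<rfloor>)\<bar>)^2) summable_on UNIV"
    using summable_on_reindex_bij_betw[OF bij, of "\<lambda>n. 1 / (1 + \<bar>real_of_int n\<bar>)^2"]
      summable_on_inverse_square_int by simp
  hence g: "?g summable_on UNIV"
    by (rule summable_on_cmult_right)
  have "infsum ?g UNIV = 4 * inverse_square_sum"
    using infsum_reindex_bij_betw[OF bij, of "\<lambda>n. 1 / (1 + \<bar>real_of_int n\<bar>)^2"] shifted
    unfolding inverse_square_sum_def by (subst infsum_cmult_right) auto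
  moreover show s: "(\<lambda>m::int. 1 / (1 + \<bar>c - real_of_int m\<bar>)^2) summable_on UNIV"
    by (rule summable_on_comparison_test[OF g]) (use inverse_square_shift_le in auto)
  ultimately show "(\<Sum>\<^sub>\<infinity>m::int. 1 / (1 + \<bar>c - real_of_int m\<bar>)^2) \<le> 4 * inverse_square_sum"
    using infsum_mono[OF s g inverse_square_shift_le] by simp
  have "(\<Sum>\<^sub>\<infinity>m\<in>{0::int}. 1 / (1 + \<bar>c - real_of_int m\<bar>)^2)
      \<le> (\<Sum>\<^sub>\<infinity>m::int. 1 / (1 + \<bar>c - real_of_int m\<bar>)^2)"
    by (rule infsum_mono2) (use s in auto)
  thus "(\<Sum>\<^sub>\<infinity>m::int. 1 / (1 + \<bar>c - real_of_int m\<bar>)^2) > 0"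
    by (simp add: order_less_le_trans[rotated])
qed

lemma inverse_square_sum_pos: "inverse_square_sum > 0"
  using infsum_inverse_square_shift_pos[of 0] unfolding inverse_square_sum_def by simp

definition lattice_weight :: "real^'n::finite \<Rightarrow> real" where
  "lattice_weight z = (\<Prod>j\<in>UNIV. 1 + \<bar>z $ j\<bar>)"

lemma lattice_weight_ge_1: "lattice_weight z \<ge> 1"
  unfolding lattice_weight_def by (rule prod_ge_1) auto

lemma lattice_weight_pos: "lattice_weight z > 0"
  using lattice_weight_ge_1[of z] by linarith

lemma sum_le_prod_one_plus:
  fixes a :: "'a \<Rightarrow> real"
  assumes "finite A" "\<And>j. a j \<ge> 0"
  shows "(\<Sum>j\<in>A. a j) \<le> (\<Prod>j\<in>A. 1 + a j)"
  using assms(1)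
proof (induction A rule: finite_induct)
  case (insert x F)
  have "(\<Prod>j\<in>F. 1 + a j) \<ge> 1"
    by (rule prod_ge_1) (use assms(2) in auto)
  hence "a x + (\<Sum>j\<in>F. a j) \<le> a x * (\<Prod>j\<in>F. 1 + a j) + (\<Prod>j\<in>F. 1 + a j)"
    using insert.IH assms(2)[of x] by (smt (verit) mult_left_mono mult_cancel_left1)
  thus ?case
    using insert by (simp add: algebra_simps)
qed simp

lemma norm_le_lattice_weight: "norm z \<le> lattice_weight z"
  using norm_le_l1_cart[of z] sum_le_prod_one_plus[of UNIV "\<lambda>j. \<bar>z $ j\<bar>"]
  unfolding lattice_weight_def by simp

lemma lattice_weight_le_infnorm:
  "lattice_weight (z::real^'n::finite) \<le> (1 + infnorm z) powr real CARD('n)"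
proof -
  have "lattice_weight z \<le> (\<Prod>j\<in>(UNIV::'n set). 1 + infnorm z)"
    unfolding lattice_weight_def by (rule prod_mono) (auto simp: component_le_infnorm_cart)
  thus ?thesis
    using infnorm_pos_le[of z] by (simp add: powr_realpow)
qed

lemma lattice_weight_powr_le: "b \<ge> 2 \<Longrightarrow> lattice_weight z powr (-b) \<le> 1 / lattice_weight z ^ 2"
  using powr_mono[of "-b" "-2" "lattice_weight z"] lattice_weight_ge_1[of z] lattice_weight_pos[of z]
  by (simp add: powr_minus_divide powr_realpow)

text \<open>The sum factorises over the coordinates into the one-dimensional sums above.\<close>

lemma
  fixes y :: "real^'n::finite"
  shows summable_on_lattice_weight: "(\<lambda>k::int^'n. 1 / lattice_weight (y - ofZ k)^2) summable_on UNIV"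
    and infsum_lattice_weight_le:
      "(\<Sum>\<^sub>\<infinity>k::int^'n. 1 / lattice_weight (y - ofZ k)^2) \<le> (4 * inverse_square_sum) ^ CARD('n)"
proof -
  define h where "h = (\<lambda>j (m::int). 1 / (1 + \<bar>y $ j - real_of_int m\<bar>)^2)"
  have prod_eq: "(\<Sum>\<^sub>\<infinity>g\<in>PiE UNIV (\<lambda>_. UNIV). \<Prod>j\<in>UNIV. h j (g j)) = (\<Prod>j\<in>UNIV. infsum (h j) UNIV)"
    by (rule infsum_prod_PiE_abs) (use summable_on_inverse_square_shift in \<open>auto simp: h_def\<close>)
  have "(\<Prod>j\<in>UNIV. infsum (h j) UNIV) > 0"
    by (rule prod_pos) (use infsum_inverse_square_shift_pos in \<open>auto simp: h_def\<close>)
  hence summable: "(\<lambda>g. \<Prod>j\<in>UNIV. h j (g j)) summable_on UNIV"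
    using prod_eq infsum_not_exists by fastforce
  have pointwise: "1 / lattice_weight (y - ofZ k)^2 = (\<Prod>j\<in>UNIV. h j (k $ j))" for k :: "int^'n"
    unfolding lattice_weight_def h_def ofZ_def by (simp add: prod_dividef prod_power_distrib)
  have bij: "bij_betw vec_nth (UNIV :: (int^'n) set) UNIV"
    by (intro bij_betwI[of _ _ _ vec_lambda]) (auto simp: vec_eq_iff)
  show "(\<lambda>k::int^'n. 1 / lattice_weight (y - ofZ k)^2) summable_on UNIV"
    unfolding pointwise using summable_on_reindex_bij_betw[OF bij] summable by fastforce
  have "(\<Sum>\<^sub>\<infinity>k::int^'n. 1 / lattice_weight (y - ofZ k)^2) = (\<Prod>j\<in>UNIV. infsum (h j) UNIV)"
    unfolding pointwise using infsum_reindex_bij_betw[OF bij, of "\<lambda>g. \<Prod>j\<in>UNIV. h j (g j)"] prod_eq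
    by simp
  also have "\<dots> \<le> (\<Prod>j\<in>(UNIV::'n set). 4 * inverse_square_sum)"
    by (rule prod_mono)
       (use infsum_inverse_square_shift_le infsum_inverse_square_shift_pos in \<open>auto simp: h_def less_imp_le\<close>)
  finally show "(\<Sum>\<^sub>\<infinity>k::int^'n. 1 / lattice_weight (y - ofZ k)^2) \<le> (4 * inverse_square_sum) ^ CARD('n)"
    by simp
qed

lemma summable_on_lattice_weight_powr:
  fixes y :: "real^'n::finite"
  assumes "b \<ge> 2" "\<And>k. 0 \<le> a k" "\<And>k. a k \<le> A"
  shows "(\<lambda>k::int^'n. a k * lattice_weight (y - ofZ k) powr (-b)) summable_on UNIV"
proof (rule summable_on_comparison_test)
  show "(\<lambda>k::int^'n. A * (1 / lattice_weight (y - ofZ k)^2)) summable_on UNIV"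
    by (intro summable_on_cmult_right summable_on_lattice_weight)
  show "a k * lattice_weight (y - ofZ k) powr (-b) \<le> A * (1 / lattice_weight (y - ofZ k)^2)"
    for k
    using mult_mono[OF assms(3) lattice_weight_powr_le[OF assms(1)]] order_trans[OF assms(2,3)]
      assms(2)[of k] by simp
  show "0 \<le> a k * lattice_weight (y - ofZ k) powr (-b)" for k
    using assms(2)[of k] by simp
qed

section \<open>Fast decay and the wavelet envelope\<close>

lemma smooth_decay_imp_fast_decay: "smooth_decay m g \<Longrightarrow> fast_decay g"
  by (cases m) auto

lemma fast_decay_imp_lattice_weight_bound:
  fixes g :: "('n::finite) fn"
  assumes "fast_decay g" "b \<ge> 0"
  shows "\<exists>C\<ge>0. \<forall>y. cmod (g y) \<le> C * lattice_weight y powr (-b)"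
proof -
  obtain C where C: "\<And>x. cmod (g x) \<le> C * (1 + infnorm x) powr (- (real CARD('n) * b))"
    using assms unfolding fast_decay_def by (meson mult_nonneg_nonneg of_nat_0_le_iff)
  have "C \<ge> 0"
    using order_trans[OF norm_ge_zero C[of 0]] by (simp add: zero_le_mult_iff infnorm_0)
  moreover have "cmod (g y) \<le> C * lattice_weight y powr (-b)" for y
  proof -
    have "lattice_weight y powr b \<le> ((1 + infnorm y) powr real CARD('n)) powr b"
      by (rule powr_mono2) (use assms(2) lattice_weight_le_infnorm[of y] lattice_weight_pos[of y] in auto)
    hence "lattice_weight y powr b \<le> (1 + infnorm y) powr (real CARD('n) * b)"
      by (simp add: powr_powr)
    hence "(1 + infnorm y) powr (- (real CARD('n) * b)) \<le> lattice_weight y powr (-b)"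
      using lattice_weight_pos[of y] infnorm_pos_le[of y]
      by (simp add: powr_minus divide_simps le_imp_inverse_le)
    thus ?thesis
      using C[of y] mult_left_mono[OF _ \<open>C \<ge> 0\<close>] by (meson order_trans)
  qed
  ultimately show ?thesis
    by blast
qed

lemma uniform_lattice_weight_bound:
  fixes g :: "'i \<Rightarrow> ('n::finite) fn"
  assumes "finite I" "\<forall>i\<in>I. fast_decay (g i)" "b \<ge> 0"
  shows "\<exists>C\<ge>0. \<forall>i\<in>I. \<forall>y. cmod (g i y) \<le> C * lattice_weight y powr (-b)"
proof -
  have "\<forall>i\<in>I. \<exists>C\<ge>0. \<forall>y. cmod (g i y) \<le> C * lattice_weight y powr (-b)"
    using fast_decay_imp_lattice_weight_bound[OF _ assms(3)] assms(2) by blast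
  then obtain Ci where Ci: "\<And>i. i \<in> I \<Longrightarrow> Ci i \<ge> 0 \<and> (\<forall>y. cmod (g i y) \<le> Ci i * lattice_weight y powr (-b))"
    by metis
  have "cmod (g i y) \<le> (\<Sum>j\<in>I. Ci j) * lattice_weight y powr (-b)" if "i \<in> I" for i y
  proof -
    have "Ci i \<le> (\<Sum>j\<in>I. Ci j)"
      by (rule member_le_sum) (use Ci assms(1) that in auto)
    thus ?thesis
      using Ci[OF that] by (meson mult_right_mono order_trans powr_ge_zero)
  qed
  moreover have "(\<Sum>j\<in>I. Ci j) \<ge> 0"
    using Ci by (simp add: sum_nonneg)
  ultimately show ?thesis
    by blast
qed

lemma norm_lattice_series_le:
  fixes c :: "int^'n::finite \<Rightarrow> complex" and g :: "'n fn"
  assumes decay: "\<And>y. cmod (g y) \<le> C * lattice_weight y powr (-b)"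
    and "b \<ge> 2" and bounded: "\<And>k. cmod (c k) \<le> A"
  shows "cmod (\<Sum>\<^sub>\<infinity>k. c k * g (y - ofZ k)) \<le> C * (\<Sum>\<^sub>\<infinity>k. cmod (c k) * lattice_weight (y - ofZ k) powr (-b))"
proof -
  have "C \<ge> 0"
  proof -
    have "0 < lattice_weight 0 powr (-b)"
      using lattice_weight_pos[of 0] by (metis powr_gt_zero less_irrefl)
    thus ?thesis
      using order_trans[OF norm_ge_zero decay[of 0]] by (auto simp: zero_le_mult_iff)
  qed
  have weighted: "(\<lambda>k. cmod (c k) * lattice_weight (y - ofZ k) powr (-b)) summable_on UNIV"
    by (rule summable_on_lattice_weight_powr[OF \<open>b \<ge> 2\<close> _ bounded]) simp
  hence majorant: "(\<lambda>k. C * (cmod (c k) * lattice_weight (y - ofZ k) powr (-b))) summable_on UNIV"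
    by (rule summable_on_cmult_right)
  have termwise: "norm (c k * g (y - ofZ k)) \<le> C * (cmod (c k) * lattice_weight (y - ofZ k) powr (-b))" for k
    using mult_left_mono[OF decay[of "y - ofZ k"], of "cmod (c k)"] by (simp add: norm_mult algebra_simps)
  have norms: "(\<lambda>k. norm (c k * g (y - ofZ k))) summable_on UNIV"
    by (rule summable_on_comparison_test[OF majorant]) (use termwise in auto)
  have "cmod (\<Sum>\<^sub>\<infinity>k. c k * g (y - ofZ k)) \<le> (\<Sum>\<^sub>\<infinity>k. norm (c k * g (y - ofZ k)))"
    by (rule norm_infsum_bound) (use norms in simp)
  also have "\<dots> \<le> (\<Sum>\<^sub>\<infinity>k. C * (cmod (c k) * lattice_weight (y - ofZ k) powr (-b)))"
    by (rule infsum_mono[OF norms majorant termwise])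
  also have "\<dots> = C * (\<Sum>\<^sub>\<infinity>k. cmod (c k) * lattice_weight (y - ofZ k) powr (-b))"
    by (rule infsum_cmult_right) (use weighted in auto)
  finally show ?thesis .
qed

definition envelope ::
  "real \<Rightarrow> nat set \<Rightarrow> (nat \<Rightarrow> nat \<Rightarrow> int^'n \<Rightarrow> real) \<Rightarrow> nat \<Rightarrow> real^'n::finite \<Rightarrow> real" where
  "envelope b I a l x =
     (\<Sum>i\<in>I. \<Sum>\<^sub>\<infinity>k. a l i k * lattice_weight ((2::real)^l *\<^sub>R x - ofZ k) powr (-b))"

lemma norm_Qop_le_envelope:
  fixes \<psi> :: "nat \<Rightarrow> ('n::finite) fn"
  assumes "\<And>i y. i \<in> wav_index TYPE('n) \<Longrightarrow> cmod (\<psi> i y) \<le> C * lattice_weight y powr (-b)"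
    and "b \<ge> 2"
    and "\<And>i k. i \<in> wav_index TYPE('n) \<Longrightarrow> cmod (wav_coef \<psi> f i l k) \<le> A"
  shows "cmod (Qop \<psi> l f x)
    \<le> C * envelope b (wav_index TYPE('n)) (\<lambda>l i k. cmod (wav_coef \<psi> f i l k)) l x"
  unfolding Qop_def envelope_def sum_distrib_left
proof (rule order_trans[OF norm_sum sum_mono])
  fix i assume "i \<in> wav_index TYPE('n)"
  thus "cmod (\<Sum>\<^sub>\<infinity>k. wav_coef \<psi> f i l k * \<psi> i ((2::real)^l *\<^sub>R x - ofZ k))
    \<le> C * (\<Sum>\<^sub>\<infinity>k. cmod (wav_coef \<psi> f i l k) * lattice_weight ((2::real)^l *\<^sub>R x - ofZ k) powr (-b))"
    by (intro norm_lattice_series_le[where A = A] assms)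
qed

section \<open>Hausdorff measure of limsup sets of balls\<close>

lemma hausdorff_pre_mono: "E \<subseteq> F \<Longrightarrow> hausdorff_pre t \<delta> E \<le> hausdorff_pre t \<delta> F"
  unfolding hausdorff_pre_def by (rule INF_superset_mono) auto

lemma hausdorff_measure_mono: "E \<subseteq> F \<Longrightarrow> hausdorff_measure t E \<le> hausdorff_measure t F"
  unfolding hausdorff_measure_def by (rule SUP_mono) (use hausdorff_pre_mono in blast)

lemma hausdorff_pre_le_countable_cover:
  fixes C :: "'c::countable \<Rightarrow> 'a::metric_space set"
  assumes "infinite (UNIV :: 'c set)" and "E \<subseteq> (\<Union>q. C q)"
    and "\<And>q. bounded (C q) \<and> diameter (C q) \<le> \<delta>"
    and summable: "(\<lambda>q. diameter (C q) powr t) summable_on UNIV"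
  shows "hausdorff_pre t \<delta> E \<le> ennreal (\<Sum>\<^sub>\<infinity>q. diameter (C q) powr t)"
proof -
  define e :: "nat \<Rightarrow> 'c" where "e = from_nat_into UNIV"
  have bij: "bij_betw e UNIV UNIV"
    unfolding e_def by (rule bij_betw_from_nat_into) (use assms(1) in auto)
  have "E \<subseteq> (\<Union>n. C (e n))"
  proof
    fix x assume "x \<in> E"
    then obtain q where "x \<in> C q"
      using assms(2) by blast
    moreover obtain n where "q = e n"
      using bij unfolding bij_betw_def by blast
    ultimately show "x \<in> (\<Union>n. C (e n))" by blast
  qed
  hence "hausdorff_pre t \<delta> E \<le> (\<Sum>n. ennreal (diameter (C (e n)) powr t))"
    unfolding hausdorff_pre_def by (intro INF_lower2[of "\<lambda>n. C (e n)"]) (auto simp: assms(3))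
  also have "\<dots> = ennreal (\<Sum>n. diameter (C (e n)) powr t)"
  proof (rule suminf_ennreal2)
    show "summable (\<lambda>n. diameter (C (e n)) powr t)"
      using summable_on_reindex_bij_betw[OF bij, of "\<lambda>q. diameter (C q) powr t"] summable
      by (simp add: summable_on_imp_summable)
  qed simp
  also have "(\<Sum>n. diameter (C (e n)) powr t) = (\<Sum>\<^sub>\<infinity>q. diameter (C q) powr t)"
  proof -
    have "((\<lambda>n. diameter (C (e n)) powr t) has_sum (\<Sum>\<^sub>\<infinity>q. diameter (C q) powr t)) UNIV"
      using has_sum_reindex_bij_betw[OF bij, of "\<lambda>q. diameter (C q) powr t"] summable
      by (simp add: has_sum_infsum)
    thus ?thesis
      by (rule sums_unique[OF has_sum_imp_sums, symmetric])
  qed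
  finally show ?thesis .
qed

lemma
  fixes f :: "nat \<Rightarrow> 'q \<Rightarrow> real"
  assumes nonneg: "\<And>l q. 0 \<le> f l q" and summable: "\<And>l. f l summable_on UNIV"
    and level: "\<And>l. (\<Sum>\<^sub>\<infinity>q. f l q) \<le> A * \<theta>^l" and "0 \<le> \<theta>" "\<theta> < 1"
  shows summable_on_geometric_levels: "(\<lambda>(l, q). f l q) summable_on UNIV"
    and infsum_geometric_levels_le: "(\<Sum>\<^sub>\<infinity>(l, q). f l q) \<le> A / (1 - \<theta>)"
proof -
  have "A \<ge> 0"
    using order_trans[OF infsum_nonneg level[of 0]] nonneg by simp
  have geometric: "((\<lambda>l. A * \<theta>^l) has_sum (A / (1 - \<theta>))) UNIV"
    using sums_mult[OF geometric_sums[of \<theta>], of A] assms(4,5) \<open>A \<ge> 0\<close>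
    by (intro sums_nonneg_imp_has_sum) auto
  have levels: "(\<lambda>l. \<Sum>\<^sub>\<infinity>q. f l q) summable_on UNIV"
    by (rule summable_on_comparison_test[OF has_sum_imp_summable[OF geometric]])
       (use level nonneg in \<open>auto intro: infsum_nonneg\<close>)
  have "(\<lambda>(l, q). f l q) summable_on UNIV \<times> UNIV"
    by (rule summable_on_SigmaI[OF _ levels]) (use summable nonneg in \<open>auto intro: has_sum_infsum\<close>)
  thus *: "(\<lambda>(l, q). f l q) summable_on UNIV"
    by simp
  have "(\<Sum>\<^sub>\<infinity>(l, q). f l q) = (\<Sum>\<^sub>\<infinity>l. \<Sum>\<^sub>\<infinity>q. f l q)"
    using infsum_Sigma_banach[of "\<lambda>(l, q). f l q" UNIV "\<lambda>_. UNIV"] * by simp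
  also have "\<dots> \<le> A / (1 - \<theta>)"
    using infsum_mono[OF levels has_sum_imp_summable[OF geometric] level] geometric
    by (simp add: infsumI)
  finally show "(\<Sum>\<^sub>\<infinity>(l, q). f l q) \<le> A / (1 - \<theta>)" .
qed

lemma hausdorff_pre_le_balls_from_level:
  fixes E :: "'a::euclidean_space set" and ctr :: "nat \<Rightarrow> 'q::countable \<Rightarrow> 'a"
    and rad :: "nat \<Rightarrow> 'q \<Rightarrow> real"
  assumes rad_nonneg: "\<And>l q. rad l q \<ge> 0"
    and covers: "\<And>x. x \<in> E \<Longrightarrow> \<exists>l\<ge>L. \<exists>q. dist x (ctr l q) \<le> rad l q"
    and summable: "\<And>l. (\<lambda>q. (2 * rad l q) powr t) summable_on UNIV"
    and cost: "\<And>l. (\<Sum>\<^sub>\<infinity>q. (2 * rad l q) powr t) \<le> A * \<theta>^l" and "0 \<le> \<theta>" "\<theta> < 1"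
    and small: "\<And>l q. l \<ge> L \<Longrightarrow> 2 * rad l q \<le> \<delta>"
  shows "hausdorff_pre t \<delta> E \<le> ennreal (A * \<theta>^L / (1 - \<theta>))"
proof -
  define C where "C = (\<lambda>(l, q). cball (ctr (L + l) q) (rad (L + l) q))"
  have diameter_C: "(\<lambda>lq. diameter (C lq) powr t) = (\<lambda>(l, q). (2 * rad (L + l) q) powr t)"
    unfolding C_def using rad_nonneg by (auto simp: fun_eq_iff not_less)
  have "E \<subseteq> (\<Union>lq. C lq)"
  proof
    fix x assume "x \<in> E"
    then obtain l q where "l \<ge> L" "dist x (ctr l q) \<le> rad l q"
      using covers by blast
    hence "x \<in> C (l - L, q)"
      unfolding C_def by (simp add: dist_commute)
    thus "x \<in> (\<Union>lq. C lq)" by blast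
  qed
  moreover have "bounded (C lq) \<and> diameter (C lq) \<le> \<delta>" for lq
  proof (cases lq)
    case (Pair l q)
    thus ?thesis
      using small[of "L + l" q] rad_nonneg[of "L + l" q] unfolding C_def by simp
  qed
  moreover have "infinite (UNIV :: (nat \<times> 'q) set)"
    by (simp add: finite_prod)
  moreover have level_cost: "(\<Sum>\<^sub>\<infinity>q. (2 * rad (L + l) q) powr t) \<le> A * \<theta>^L * \<theta>^l" for l
    using cost[of "L + l"] by (simp add: power_add mult.assoc)
  note geometric_levels = summable_on_geometric_levels[OF _ summable level_cost]
    infsum_geometric_levels_le[OF _ summable level_cost]
  ultimately have "hausdorff_pre t \<delta> E \<le> ennreal (\<Sum>\<^sub>\<infinity>lq. diameter (C lq) powr t)"
    using assms(5,6) by (intro hausdorff_pre_le_countable_cover) (simp_all add: diameter_C)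
  also have "\<dots> \<le> ennreal (A * \<theta>^L / (1 - \<theta>))"
    using geometric_levels assms(5,6) by (simp add: diameter_C ennreal_leI)
  finally show ?thesis .
qed

text \<open>A Borel--Cantelli type covering argument: the balls of levels \<open>\<ge> L\<close> cover \<open>E\<close> at total cost
  \<open>O(\<theta>\<^sup>L)\<close>.\<close>

lemma hausdorff_measure_limsup_balls_eq_0:
  fixes E :: "'a::euclidean_space set" and ctr :: "nat \<Rightarrow> 'q::countable \<Rightarrow> 'a"
    and rad :: "nat \<Rightarrow> 'q \<Rightarrow> real"
  assumes rad_nonneg: "\<And>l q. rad l q \<ge> 0"
    and covers: "\<And>x L. x \<in> E \<Longrightarrow> \<exists>l\<ge>L. \<exists>q. dist x (ctr l q) \<le> rad l q"
    and summable: "\<And>l. (\<lambda>q. (2 * rad l q) powr t) summable_on UNIV"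
    and cost: "\<And>l. (\<Sum>\<^sub>\<infinity>q. (2 * rad l q) powr t) \<le> A * \<theta>^l" and "0 \<le> \<theta>" "\<theta> < 1"
    and radius: "\<And>l q. rad l q \<le> R * \<eta>^l" and "0 \<le> \<eta>" "\<eta> < 1"
  shows "hausdorff_measure t E = 0"
proof -
  have small: "hausdorff_pre t \<delta> E \<le> ennreal \<epsilon>" if "\<delta> > 0" "\<epsilon> > 0" for \<delta> \<epsilon>
  proof -
    have "(\<lambda>L. A * \<theta>^L / (1 - \<theta>)) \<longlonglongrightarrow> A * 0 / (1 - \<theta>)"
      by (intro tendsto_intros LIMSEQ_power_zero) (use \<open>\<theta> < 1\<close> \<open>0 \<le> \<theta>\<close> in auto)
    hence "eventually (\<lambda>L. A * \<theta>^L / (1 - \<theta>) < \<epsilon>) sequentially"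
      using order_tendstoD(2) \<open>\<epsilon> > 0\<close> by fastforce
    moreover have "(\<lambda>L. R * \<eta>^L) \<longlonglongrightarrow> R * 0"
      by (intro tendsto_intros LIMSEQ_power_zero) (use \<open>\<eta> < 1\<close> \<open>0 \<le> \<eta>\<close> in auto)
    hence "eventually (\<lambda>L. R * \<eta>^L < \<delta>/2) sequentially"
      using \<open>\<delta> > 0\<close> by (intro order_tendstoD(2)) auto
    ultimately obtain N1 N2 where N1: "\<And>n. n \<ge> N1 \<Longrightarrow> A * \<theta>^n / (1 - \<theta>) < \<epsilon>"
      and N2: "\<And>n. n \<ge> N2 \<Longrightarrow> R * \<eta>^n < \<delta>/2"
      unfolding eventually_sequentially by blast
    have "hausdorff_pre t \<delta> E \<le> ennreal (A * \<theta>^max N1 N2 / (1 - \<theta>))"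
    proof (rule hausdorff_pre_le_balls_from_level[OF rad_nonneg _ summable cost assms(5,6)])
      show "\<exists>l\<ge>max N1 N2. \<exists>q. dist x (ctr l q) \<le> rad l q" if "x \<in> E" for x
        using covers[OF that] .
      show "2 * rad l q \<le> \<delta>" if "l \<ge> max N1 N2" for l q
        using radius[of l q] N2[of l] that by simp
    qed
    also have "\<dots> \<le> ennreal \<epsilon>"
      using N1[of "max N1 N2"] by (simp add: ennreal_leI)
    finally show ?thesis .
  qed
  have "hausdorff_pre t \<delta> E \<le> 0" if "\<delta> > 0" for \<delta>
  proof (rule ennreal_le_epsilon)
    fix \<epsilon> :: real assume "\<epsilon> > 0"
    thus "hausdorff_pre t \<delta> E \<le> 0 + ennreal \<epsilon>"
      using small[OF that \<open>\<epsilon> > 0\<close>] by simp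
  qed
  hence "hausdorff_measure t E \<le> 0"
    unfolding hausdorff_measure_def by (intro SUP_least) auto
  thus ?thesis
    by simp
qed

lemma hausdorff_dim_le:
  assumes "D \<ge> 0" and "\<And>t. t > D \<Longrightarrow> hausdorff_measure t E = 0"
  shows "hausdorff_dim E \<le> D"
  unfolding hausdorff_dim_def
proof (rule field_le_epsilon)
  fix e :: real assume "e > 0"
  thus "Inf {t. t \<ge> 0 \<and> hausdorff_measure t E = 0} \<le> D + e"
    by (intro cInf_lower) (use assms in \<open>auto intro: bdd_belowI[of _ 0]\<close>)
qed

lemma le_root_infsum_powr:
  fixes g :: "'a \<Rightarrow> real"
  assumes "(\<lambda>y. g y powr p) summable_on A" and "x \<in> A" and "g x \<ge> 0" and "p > 0"
  shows "g x \<le> (\<Sum>\<^sub>\<infinity>y\<in>A. g y powr p) powr (1 / p)"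
proof -
  have "(\<Sum>\<^sub>\<infinity>y\<in>{x}. g y powr p) \<le> (\<Sum>\<^sub>\<infinity>y\<in>A. g y powr p)"
    by (rule infsum_mono2) (use assms in auto)
  hence "(g x powr p) powr (1 / p) \<le> (\<Sum>\<^sub>\<infinity>y\<in>A. g y powr p) powr (1 / p)"
    using \<open>p > 0\<close> by (intro powr_mono2) auto
  thus ?thesis
    using assms(3,4) by (simp add: powr_powr)
qed

lemma besov_coefficient_bounds:
  fixes \<psi> :: "nat \<Rightarrow> ('n::finite) fn"
  assumes "f \<in> besov_inf \<phi> \<psi> s p" and "p > 0"
  obtains B where "B \<ge> 0"
    and "\<And>l. (\<lambda>(i, k). cmod (wav_coef \<psi> f i l k) powr p) summable_on (wav_index TYPE('n) \<times> UNIV)"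
    and "\<And>l. (\<Sum>\<^sub>\<infinity>(i, k)\<in>wav_index TYPE('n) \<times> UNIV. cmod (wav_coef \<psi> f i l k) powr p)
               \<le> B powr p * 2 powr ((real CARD('n) - s * p) * real l)"
    and "\<And>l i k. i \<in> wav_index TYPE('n) \<Longrightarrow>
               cmod (wav_coef \<psi> f i l k) \<le> B * 2 powr ((real CARD('n) - s * p) / p * real l)"
proof -
  let ?I = "wav_index TYPE('n)"
  define T where "T = (\<lambda>l. \<Sum>\<^sub>\<infinity>(i, k)\<in>?I \<times> UNIV. cmod (wav_coef \<psi> f i l k) powr p)"
  have summable: "(\<lambda>(i, k). cmod (wav_coef \<psi> f i l k) powr p) summable_on (?I \<times> UNIV)" for l
    using assms(1) unfolding besov_inf_def by auto
  obtain B where B: "\<And>l. norm (besov_eps \<psi> s p f l) \<le> B"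
    using assms(1) unfolding besov_inf_def bounded_iff by blast
  have "B \<ge> 0"
    using order_trans[OF norm_ge_zero B[of 0]] .
  have "T l \<ge> 0" for l
    unfolding T_def by (rule infsum_nonneg) (auto simp: case_prod_beta)
  have root: "T l powr (1 / p) \<le> B * 2 powr ((real CARD('n) - s * p) / p * real l)" for l
  proof -
    define e where "e = (real CARD('n) - s * p) / p * real l"
    have "(s - real CARD('n) / p) * real l = - e"
      unfolding e_def using \<open>p > 0\<close> by (simp add: field_simps)
    hence "2 powr (- e) * T l powr (1 / p) \<le> B"
      using B[of l] unfolding besov_eps_def T_def by simp
    hence "2 powr e * (2 powr (- e) * T l powr (1 / p)) \<le> 2 powr e * B"
      by (rule mult_left_mono) simp
    moreover have "2 powr e * (2 powr (- e) * T l powr (1 / p)) = T l powr (1 / p)"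
      by (simp add: powr_minus)
    ultimately show ?thesis
      unfolding e_def by (metis mult.commute)
  qed
  have level_sum: "T l \<le> B powr p * 2 powr ((real CARD('n) - s * p) * real l)" for l
  proof -
    have "T l = (T l powr (1 / p)) powr p"
      using \<open>p > 0\<close> \<open>T l \<ge> 0\<close> by (simp add: powr_powr)
    also have "\<dots> \<le> (B * 2 powr ((real CARD('n) - s * p) / p * real l)) powr p"
      using root \<open>p > 0\<close> by (intro powr_mono2) auto
    also have "\<dots> = B powr p * 2 powr ((real CARD('n) - s * p) * real l)"
      using \<open>p > 0\<close> \<open>B \<ge> 0\<close> by (simp add: powr_mult powr_powr)
    finally show ?thesis .
  qed
  have "cmod (wav_coef \<psi> f i l k) \<le> B * 2 powr ((real CARD('n) - s * p) / p * real l)"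
    if "i \<in> ?I" for l i k
    using le_root_infsum_powr[of "\<lambda>(i, k). cmod (wav_coef \<psi> f i l k)" p "?I \<times> UNIV" "(i, k)"]
      summable[of l] root[of l] that \<open>p > 0\<close>
    unfolding T_def by (simp add: case_prod_unfold)
  with that[OF \<open>B \<ge> 0\<close> summable] level_sum show thesis
    unfolding T_def by blast
qed

section \<open>Covering the set where the envelope is large\<close>

lemma exists_large_coefficient:
  fixes y :: "real^'n::finite" and a :: "nat \<Rightarrow> int^'n \<Rightarrow> real"
  assumes "finite I" and "M > 0" and "X > 0"
    and a: "\<And>i k. i \<in> I \<Longrightarrow> 0 \<le> a i k \<and> a i k \<le> A"
    and large: "X \<le> (\<Sum>i\<in>I. \<Sum>\<^sub>\<infinity>k. a i k * lattice_weight (y - ofZ k) powr (-(M + 2)))"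
  shows "\<exists>i\<in>I. \<exists>k. X / (2 * real (card I) * (4 * inverse_square_sum) ^ CARD('n))
                      * lattice_weight (y - ofZ k) powr M \<le> a i k"
proof (rule ccontr)
  define S where "S = (4 * inverse_square_sum) ^ CARD('n)"
  define X' where "X' = X / (2 * real (card I) * S)"
  have "I \<noteq> {}"
    using large \<open>X > 0\<close> by auto
  hence "real (card I) > 0"
    using \<open>finite I\<close> by auto
  have "S > 0"
    unfolding S_def using inverse_square_sum_pos by simp
  assume "\<not> ?thesis"
  hence small: "a i k < X' * lattice_weight (y - ofZ k) powr M" if "i \<in> I" for i k
    using that unfolding X'_def S_def by (meson not_le)
  have "(\<Sum>\<^sub>\<infinity>k. a i k * lattice_weight (y - ofZ k) powr (-(M + 2))) \<le> X' * S" if "i \<in> I" for i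
  proof -
    have "a i k * lattice_weight (y - ofZ k) powr (-(M + 2))
        \<le> (X' * lattice_weight (y - ofZ k) powr M) * lattice_weight (y - ofZ k) powr (-(M + 2))" for k
      by (rule mult_right_mono) (use small[OF that, of k] in auto)
    also have "(X' * lattice_weight (y - ofZ k) powr M) * lattice_weight (y - ofZ k) powr (-(M + 2))
        = X' * (1 / lattice_weight (y - ofZ k)^2)" for k
      using lattice_weight_pos[of "y - ofZ k"]
      by (simp add: mult.assoc powr_add[symmetric] powr_minus_divide powr_realpow)
    finally have termwise: "a i k * lattice_weight (y - ofZ k) powr (-(M + 2))
        \<le> X' * (1 / lattice_weight (y - ofZ k)^2)" for k .
    have "(\<Sum>\<^sub>\<infinity>k. a i k * lattice_weight (y - ofZ k) powr (-(M + 2)))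
        \<le> (\<Sum>\<^sub>\<infinity>k. X' * (1 / lattice_weight (y - ofZ k)^2))"
    proof (rule infsum_mono[OF _ _ termwise])
      show "(\<lambda>k. a i k * lattice_weight (y - ofZ k) powr (-(M + 2))) summable_on UNIV"
        by (rule summable_on_lattice_weight_powr[where A = A]) (use a[OF that] \<open>M > 0\<close> in auto)
    qed (intro summable_on_cmult_right summable_on_lattice_weight)
    also have "\<dots> = X' * (\<Sum>\<^sub>\<infinity>k. 1 / lattice_weight (y - ofZ k)^2)"
      by (intro infsum_cmult_right summable_on_lattice_weight)
    also have "\<dots> \<le> X' * S"
      unfolding S_def using \<open>X > 0\<close> \<open>S > 0\<close> \<open>real (card I) > 0\<close>
      by (intro mult_left_mono infsum_lattice_weight_le) (simp add: X'_def)
    finally show ?thesis .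
  qed
  hence "(\<Sum>i\<in>I. \<Sum>\<^sub>\<infinity>k. a i k * lattice_weight (y - ofZ k) powr (-(M + 2))) \<le> real (card I) * (X' * S)"
    using sum_mono[of I _ "\<lambda>_. X' * S"] by simp
  also have "\<dots> = X / 2"
    unfolding X'_def using \<open>real (card I) > 0\<close> \<open>S > 0\<close> by simp
  finally show False
    using large \<open>X > 0\<close> by linarith
qed

lemma dist_le_lattice_weight:
  "dist x (inverse (2 ^ l) *\<^sub>R ofZ k) \<le> inverse (2 ^ l) * lattice_weight ((2::real)^l *\<^sub>R x - ofZ k)"
proof -
  have "x - inverse (2 ^ l) *\<^sub>R ofZ k = inverse (2 ^ l) *\<^sub>R ((2::real)^l *\<^sub>R x - ofZ k)"
    by (simp add: algebra_simps)
  thus ?thesis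
    using norm_le_lattice_weight[of "(2::real)^l *\<^sub>R x - ofZ k"] by (simp add: dist_norm)
qed

lemma envelope_ge_imp_near_dyadic_point:
  fixes a :: "nat \<Rightarrow> nat \<Rightarrow> int^'n::finite \<Rightarrow> real"
  assumes "finite I" "M > 0" "X > 0"
    and a: "\<And>i k. i \<in> I \<Longrightarrow> 0 \<le> a l i k \<and> a l i k \<le> A"
    and "X \<le> envelope (M + 2) I a l x"
  shows "\<exists>i\<in>I. \<exists>k. dist x (inverse (2 ^ l) *\<^sub>R ofZ k)
           \<le> inverse (2 ^ l) * (a l i k / (X / (2 * real (card I) * (4 * inverse_square_sum) ^ CARD('n)))) powr (1 / M)"
proof -
  define X' where "X' = X / (2 * real (card I) * (4 * inverse_square_sum) ^ CARD('n))"
  have "I \<noteq> {}"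
    using assms(5) \<open>X > 0\<close> unfolding envelope_def by auto
  hence "X' > 0"
    unfolding X'_def using \<open>X > 0\<close> \<open>finite I\<close> inverse_square_sum_pos by (simp add: card_gt_0_iff)
  obtain i k where "i \<in> I" and large: "X' * lattice_weight ((2::real)^l *\<^sub>R x - ofZ k) powr M \<le> a l i k"
    using exists_large_coefficient[of I M X "a l" A "(2::real)^l *\<^sub>R x"] assms
    unfolding envelope_def X'_def by blast
  hence "lattice_weight ((2::real)^l *\<^sub>R x - ofZ k) powr M \<le> a l i k / X'"
    using \<open>X' > 0\<close> by (simp add: field_simps)
  hence "(lattice_weight ((2::real)^l *\<^sub>R x - ofZ k) powr M) powr (1 / M) \<le> (a l i k / X') powr (1 / M)"
    using \<open>M > 0\<close> by (intro powr_mono2) auto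
  hence "lattice_weight ((2::real)^l *\<^sub>R x - ofZ k) \<le> (a l i k / X') powr (1 / M)"
    using \<open>M > 0\<close> lattice_weight_pos by (simp add: powr_powr)
  hence "inverse (2 ^ l) * lattice_weight ((2::real)^l *\<^sub>R x - ofZ k)
      \<le> inverse (2 ^ l) * (a l i k / X') powr (1 / M)"
    by (rule mult_left_mono) simp
  hence "dist x (inverse (2 ^ l) *\<^sub>R ofZ k) \<le> inverse (2 ^ l) * (a l i k / X') powr (1 / M)"
    using dist_le_lattice_weight[of x l k] by linarith
  thus ?thesis
    using \<open>i \<in> I\<close> unfolding X'_def by blast
qed

lemma inverse_two_power_eq_powr: "inverse ((2::real) ^ l) = 2 powr (- real l)"
  by (simp add: powr_minus powr_realpow)

lemma two_powr_power: "(2 powr e) ^ l = (2::real) powr (e * real l)"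
  by (simp add: powr_power mult.commute)

text \<open>Each coefficient \<open>c i k\<close> of level \<open>l\<close> yields a ball around \<open>2\<^sup>-\<^sup>l k\<close> whose \<open>t\<close>-dimensional cost
  is proportional to \<open>c i k powr p\<close>, so an \<open>\<ell>\<^sup>p\<close> bound on the level controls its total cost.\<close>

lemma
  fixes c :: "nat \<Rightarrow> int^'n::finite \<Rightarrow> real" and l :: nat
  assumes "t > 0" "p > 0" "X > 0" and nonneg: "\<And>i k. 0 \<le> c i k"
    and summable: "(\<lambda>(i, k). c i k powr p) summable_on (I \<times> UNIV)"
  defines "r \<equiv> \<lambda>(i, k). if i \<in> I then inverse (2 ^ l) * (c i k / X) powr (p / t) else 0"
  shows summable_on_coefficient_balls_cost: "(\<lambda>ik. (2 * r ik) powr t) summable_on UNIV"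
    and infsum_coefficient_balls_cost:
      "(\<Sum>\<^sub>\<infinity>ik. (2 * r ik) powr t)
         = 2 powr t * 2 powr (- real l * t) / X powr p * (\<Sum>\<^sub>\<infinity>(i, k)\<in>I \<times> UNIV. c i k powr p)"
proof -
  define K where "K = 2 powr t * 2 powr (- real l * t) / X powr p"
  have cost: "(2 * r ik) powr t = (if fst ik \<in> I then K * c (fst ik) (snd ik) powr p else 0)" for ik
  proof (cases "fst ik \<in> I")
    case True
    have "(2 * (inverse (2 ^ l) * (c (fst ik) (snd ik) / X) powr (p / t))) powr t
        = 2 powr t * 2 powr (- real l * t) * (c (fst ik) (snd ik) / X) powr p"
      using assms(1-3) nonneg by (simp add: inverse_two_power_eq_powr powr_mult powr_powr)
    thus ?thesis
      using True \<open>X > 0\<close> nonneg unfolding r_def K_def by (simp add: case_prod_beta powr_divide)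
  qed (simp add: r_def case_prod_beta)
  have scaled: "(\<lambda>ik. K * c (fst ik) (snd ik) powr p) summable_on (I \<times> UNIV)"
    using summable_on_cmult_right[OF summable, of K] by (simp add: case_prod_beta)
  show "(\<lambda>ik. (2 * r ik) powr t) summable_on UNIV"
    using scaled by (subst summable_on_cong_neutral[symmetric]) (auto simp: cost)
  have "(\<Sum>\<^sub>\<infinity>ik. (2 * r ik) powr t) = (\<Sum>\<^sub>\<infinity>ik\<in>I \<times> UNIV. K * c (fst ik) (snd ik) powr p)"
    by (rule infsum_cong_neutral[symmetric]) (auto simp: cost)
  also have "\<dots> = K * (\<Sum>\<^sub>\<infinity>(i, k)\<in>I \<times> UNIV. c i k powr p)"
    using infsum_cmult_right[of K, OF summable] by (simp add: case_prod_beta)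
  finally show "(\<Sum>\<^sub>\<infinity>ik. (2 * r ik) powr t)
      = 2 powr t * 2 powr (- real l * t) / X powr p * (\<Sum>\<^sub>\<infinity>(i, k)\<in>I \<times> UNIV. c i k powr p)"
    unfolding K_def .
qed

lemma dyadic_level_cost_eq:
  fixes B Q t p \<gamma> \<sigma> :: real
  assumes "Q > 0"
  shows "2 powr t * 2 powr (- real l * t) / (2 powr (\<gamma> * real l) / Q) powr p * (B powr p * 2 powr (\<sigma> * real l))
         = 2 powr t * Q powr p * B powr p * (2 powr (\<sigma> - \<gamma> * p - t)) ^ l"
proof -
  have "(2 powr (\<gamma> * real l) / Q) powr p = 2 powr (\<gamma> * p * real l) / Q powr p"
    using assms by (simp add: powr_divide powr_powr mult_ac)
  moreover have "2 powr (- real l * t) * 2 powr (\<sigma> * real l) / 2 powr (\<gamma> * p * real l)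
      = (2 powr (\<sigma> - \<gamma> * p - t)) ^ l"
    by (simp add: two_powr_power powr_add[symmetric] powr_diff[symmetric] algebra_simps)
  ultimately show ?thesis
    using assms by (simp add: field_simps)
qed

lemma dyadic_ball_radius:
  fixes B Q t p \<gamma> \<sigma> :: real
  assumes "B \<ge> 0" "Q > 0" "t > 0" "p > 0"
  shows "inverse (2 ^ l) * (B * 2 powr (\<sigma> / p * real l) / (2 powr (\<gamma> * real l) / Q)) powr (p / t)
         = (B * Q) powr (p / t) * (2 powr ((\<sigma> - \<gamma> * p) / t - 1)) ^ l"
proof -
  have "B * 2 powr (\<sigma> / p * real l) / (2 powr (\<gamma> * real l) / Q)
      = (B * Q) * 2 powr ((\<sigma> / p - \<gamma>) * real l)"
    by (simp add: powr_diff left_diff_distrib)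
  hence "(B * 2 powr (\<sigma> / p * real l) / (2 powr (\<gamma> * real l) / Q)) powr (p / t)
      = ((B * Q) * 2 powr ((\<sigma> / p - \<gamma>) * real l)) powr (p / t)"
    by (simp only:)
  also have "\<dots> = (B * Q) powr (p / t) * 2 powr ((\<sigma> / p - \<gamma>) * real l * (p / t))"
    using assms by (simp add: powr_mult powr_powr)
  also have "(\<sigma> / p - \<gamma>) * real l * (p / t) = (\<sigma> - \<gamma> * p) / t * real l"
    using assms by (simp add: field_simps)
  finally have "(B * 2 powr (\<sigma> / p * real l) / (2 powr (\<gamma> * real l) / Q)) powr (p / t)
      = (B * Q) powr (p / t) * 2 powr ((\<sigma> - \<gamma> * p) / t * real l)" .
  moreover have "2 powr (- real l) * 2 powr ((\<sigma> - \<gamma> * p) / t * real l)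
      = (2 powr ((\<sigma> - \<gamma> * p) / t - 1)) ^ l"
    by (simp add: two_powr_power powr_add[symmetric] algebra_simps)
  ultimately show ?thesis
    by (simp add: inverse_two_power_eq_powr mult_ac)
qed

lemma hausdorff_measure_envelope_limsup_eq_0:
  fixes a :: "nat \<Rightarrow> nat \<Rightarrow> int^'n::finite \<Rightarrow> real"
  assumes "finite I" "I \<noteq> {}" "t > 0" "p > 0" "B \<ge> 0"
    and nonneg: "\<And>l i k. 0 \<le> a l i k"
    and summable: "\<And>l. (\<lambda>(i, k). a l i k powr p) summable_on (I \<times> UNIV)"
    and level_sum: "\<And>l. (\<Sum>\<^sub>\<infinity>(i, k)\<in>I \<times> UNIV. a l i k powr p) \<le> B powr p * 2 powr (\<sigma> * real l)"
    and coefficient: "\<And>l i k. i \<in> I \<Longrightarrow> a l i k \<le> B * 2 powr (\<sigma> / p * real l)"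
    and "\<sigma> - \<gamma> * p < t"
  shows "hausdorff_measure t {x. \<forall>L. \<exists>l\<ge>L. 2 powr (\<gamma> * real l) \<le> envelope (t / p + 2) I a l x} = 0"
proof -
  define Q where "Q = 2 * real (card I) * (4 * inverse_square_sum) ^ CARD('n)"
  define X where "X = (\<lambda>l::nat. 2 powr (\<gamma> * real l) / Q)"
  define rad :: "nat \<Rightarrow> nat \<times> (int^'n) \<Rightarrow> real" where
    "rad = (\<lambda>l (i, k). if i \<in> I then inverse (2 ^ l) * (a l i k / X l) powr (p / t) else 0)"
  define ctr :: "nat \<Rightarrow> nat \<times> (int^'n) \<Rightarrow> real^'n" where
    "ctr = (\<lambda>l (i, k). inverse (2 ^ l) *\<^sub>R ofZ k)"
  have "Q > 0"
    unfolding Q_def using assms(1,2) inverse_square_sum_pos by (simp add: card_gt_0_iff)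
  hence "X l > 0" for l
    unfolding X_def by simp
  have level_summable: "(\<lambda>ik. (2 * rad l ik) powr t) summable_on UNIV" for l
    unfolding rad_def
    by (rule summable_on_coefficient_balls_cost[OF \<open>t > 0\<close> \<open>p > 0\<close> \<open>X l > 0\<close> nonneg summable])
  have level_cost: "(\<Sum>\<^sub>\<infinity>ik. (2 * rad l ik) powr t)
      = 2 powr t * 2 powr (- real l * t) / X l powr p * (\<Sum>\<^sub>\<infinity>(i, k)\<in>I \<times> UNIV. a l i k powr p)" for l
    unfolding rad_def
    by (rule infsum_coefficient_balls_cost[OF \<open>t > 0\<close> \<open>p > 0\<close> \<open>X l > 0\<close> nonneg summable])
  show ?thesis
  proof (rule hausdorff_measure_limsup_balls_eq_0[where ctr = ctr and rad = rad
        and A = "2 powr t * Q powr p * B powr p" and \<theta> = "2 powr (\<sigma> - \<gamma> * p - t)"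
        and R = "(B * Q) powr (p / t)" and \<eta> = "2 powr ((\<sigma> - \<gamma> * p) / t - 1)"])
    show "rad l ik \<ge> 0" for l ik
      unfolding rad_def by (simp add: case_prod_beta)
    show "(\<lambda>ik. (2 * rad l ik) powr t) summable_on UNIV" for l
      by (fact level_summable)
    show "(\<Sum>\<^sub>\<infinity>ik. (2 * rad l ik) powr t) \<le> 2 powr t * Q powr p * B powr p * (2 powr (\<sigma> - \<gamma> * p - t)) ^ l"
      for l
    proof -
      have "(\<Sum>\<^sub>\<infinity>ik. (2 * rad l ik) powr t)
          \<le> 2 powr t * 2 powr (- real l * t) / X l powr p * (B powr p * 2 powr (\<sigma> * real l))"
        unfolding level_cost by (rule mult_left_mono[OF level_sum]) simp
      thus ?thesis
        unfolding X_def dyadic_level_cost_eq[OF \<open>Q > 0\<close>] .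
    qed
    show "rad l ik \<le> (B * Q) powr (p / t) * (2 powr ((\<sigma> - \<gamma> * p) / t - 1)) ^ l" for l ik
    proof (cases "fst ik \<in> I")
      case True
      have "rad l ik \<le> inverse (2 ^ l) * (B * 2 powr (\<sigma> / p * real l) / X l) powr (p / t)"
        unfolding rad_def using True coefficient[OF True] \<open>X l > 0\<close> \<open>t > 0\<close> \<open>p > 0\<close> nonneg
        by (auto simp: case_prod_beta intro!: mult_left_mono powr_mono2 divide_right_mono)
      also have "\<dots> = (B * Q) powr (p / t) * (2 powr ((\<sigma> - \<gamma> * p) / t - 1)) ^ l"
        unfolding X_def by (rule dyadic_ball_radius[OF \<open>B \<ge> 0\<close> \<open>Q > 0\<close> \<open>t > 0\<close> \<open>p > 0\<close>])
      finally show ?thesis .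
    qed (simp add: rad_def case_prod_beta)
    show "0 \<le> 2 powr (\<sigma> - \<gamma> * p - t)" "0 \<le> 2 powr ((\<sigma> - \<gamma> * p) / t - 1)"
      by simp_all
    show "2 powr (\<sigma> - \<gamma> * p - t) < 1" "2 powr ((\<sigma> - \<gamma> * p) / t - 1) < 1"
      using \<open>\<sigma> - \<gamma> * p < t\<close> \<open>t > 0\<close> by (simp_all add: powr_less_one divide_less_eq)
    fix x L
    assume "x \<in> {x. \<forall>L. \<exists>l\<ge>L. 2 powr (\<gamma> * real l) \<le> envelope (t / p + 2) I a l x}"
    then obtain l where "l \<ge> L" and large: "2 powr (\<gamma> * real l) \<le> envelope (t / p + 2) I a l x"
      by blast
    obtain i k where "i \<in> I" and "dist x (inverse (2 ^ l) *\<^sub>R ofZ k)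
        \<le> inverse (2 ^ l) * (a l i k / (2 powr (\<gamma> * real l) / Q)) powr (1 / (t / p))"
      using envelope_ge_imp_near_dyadic_point[OF \<open>finite I\<close> _ _ _ large] coefficient nonneg
        \<open>t > 0\<close> \<open>p > 0\<close> unfolding Q_def by fastforce
    hence "dist x (ctr l (i, k)) \<le> rad l (i, k)"
      unfolding ctr_def rad_def X_def by simp
    thus "\<exists>l\<ge>L. \<exists>ik. dist x (ctr l ik) \<le> rad l ik"
      using \<open>l \<ge> L\<close> by blast
  qed
qed

section \<open>Exponential growth rates\<close>

lemma limsup_log_rate_le:
  fixes V :: "nat \<Rightarrow> real"
  assumes "\<And>j. V j \<ge> 0" and "eventually (\<lambda>j. V j < (2 powr g) ^ j) sequentially"
  shows "limsup (\<lambda>j. logE (V j) / ereal (real j * ln 2)) \<le> ereal g"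
  unfolding Limsup_le_iff
proof (intro allI impI)
  fix y assume "ereal g < y"
  have rate: "logE (V j) / ereal (real j * ln 2) < y" if "j \<ge> 1" "V j < (2 powr g) ^ j" for j
  proof -
    have pos: "real j * ln 2 > 0"
      using that(1) by simp
    show ?thesis
    proof (cases "V j = 0")
      case True
      have "logE (V j) / ereal (real j * ln 2) = - \<infinity>"
        using True pos by (simp add: logE_def divide_ereal_def)
      thus ?thesis
        using \<open>ereal g < y\<close> by auto
    next
      case False
      have "ln (V j) < ln ((2 powr g) ^ j)"
        using False assms(1)[of j] that(2) by simp
      also have "ln ((2 powr g) ^ j) = g * (real j * ln 2)"
        by (simp add: two_powr_power ln_powr)
      finally have "ln (V j) / (real j * ln 2) < g"
        using pos by (simp add: divide_less_eq)
      moreover have "logE (V j) = ereal (ln (V j))"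
        using False by (simp add: logE_def)
      hence "logE (V j) / ereal (real j * ln 2) = ereal (ln (V j) / (real j * ln 2))"
        by (metis ereal_divide less_irrefl pos)
      ultimately show ?thesis
        using \<open>ereal g < y\<close> by (metis ereal_less_eq(3) less_imp_le order_le_less_trans)
    qed
  qed
  show "eventually (\<lambda>j. y > logE (V j) / ereal (real j * ln 2)) sequentially"
    using assms(2) eventually_ge_at_top[of 1] by eventually_elim (simp add: rate)
qed
lemma eventually_affine_lt_power:
  fixes A B r r' :: real
  assumes "0 < r" "r < r'" "A = 0 \<or> 1 < r'"
  shows "eventually (\<lambda>j. A + B * r ^ j < r' ^ j) sequentially"
proof -
  have "(\<lambda>j. A * (1 / r') ^ j + B * (r / r') ^ j) \<longlonglongrightarrow> 0"
  proof (cases "A = 0")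
    case True
    thus ?thesis
      using assms by (simp add: tendsto_mult_right_zero LIMSEQ_power_zero)
  next
    case False
    thus ?thesis
      using assms by (intro tendsto_add_zero tendsto_mult_right_zero LIMSEQ_power_zero) auto
  qed
  moreover have "A * (1 / r') ^ j + B * (r / r') ^ j = (A + B * r ^ j) / r' ^ j" for j
    using assms by (simp add: field_simps power_divide)
  ultimately have "(\<lambda>j. (A + B * r ^ j) / r' ^ j) \<longlonglongrightarrow> 0"
    by simp
  hence "eventually (\<lambda>j. (A + B * r ^ j) / r' ^ j < 1) sequentially"
    by (rule order_tendstoD(2)) simp
  thus ?thesis
    by eventually_elim (use assms in \<open>simp add: divide_less_eq\<close>)
qed

lemma partial_sums_eventually_lt_power:
  fixes q :: "nat \<Rightarrow> 'a::real_normed_vector"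
  assumes bound: "\<And>l. l \<ge> L \<Longrightarrow> norm (q l) \<le> C * r ^ l" and "1 < r" "r < r'"
  shows "eventually (\<lambda>j. norm (a + (\<Sum>l<j. q l)) < r' ^ j) sequentially"
proof -
  define A where "A = norm a + (\<Sum>l<L. norm (q l))"
  have partial: "norm (a + (\<Sum>l<j. q l)) \<le> A + \<bar>C\<bar> / (r - 1) * r ^ j" for j
  proof -
    have "norm (q l) \<le> (if l < L then norm (q l) else 0) + \<bar>C\<bar> * r ^ l" for l
    proof (cases "l < L")
      case False
      have "C * r ^ l \<le> \<bar>C\<bar> * r ^ l"
        using \<open>1 < r\<close> by (intro mult_right_mono) simp_all
      thus ?thesis
        using False bound[of l] by simp
    qed (use \<open>1 < r\<close> in simp)
    hence "(\<Sum>l<j. norm (q l)) \<le> (\<Sum>l<j. (if l < L then norm (q l) else 0) + \<bar>C\<bar> * r ^ l)"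
      by (rule sum_mono)
    also have "\<dots> = (\<Sum>l<j. if l < L then norm (q l) else 0) + \<bar>C\<bar> * (\<Sum>l<j. r ^ l)"
      by (simp add: sum.distrib sum_distrib_left)
    also have "(\<Sum>l<j. if l < L then norm (q l) else 0) \<le> (\<Sum>l<L. norm (q l))"
      by (simp add: sum.If_cases Int_def) (intro sum_mono2, auto)
    also have "(\<Sum>l<j. r ^ l) \<le> r ^ j / (r - 1)"
      using \<open>1 < r\<close> by (simp add: geometric_sum divide_right_mono)
    finally have "(\<Sum>l<j. norm (q l)) \<le> (\<Sum>l<L. norm (q l)) + \<bar>C\<bar> * (r ^ j / (r - 1))"
      by (simp add: mult_left_mono)
    moreover have "norm (a + (\<Sum>l<j. q l)) \<le> norm a + (\<Sum>l<j. norm (q l))"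
      by (rule order_trans[OF norm_triangle_ineq add_left_mono[OF norm_sum]])
    ultimately show ?thesis
      unfolding A_def by simp
  qed
  have "eventually (\<lambda>j. A + \<bar>C\<bar> / (r - 1) * r ^ j < r' ^ j) sequentially"
    using assms by (intro eventually_affine_lt_power) auto
  thus ?thesis
    by eventually_elim (rule le_less_trans[OF partial])
qed

lemma tail_sums_eventually_lt_power:
  fixes q :: "nat \<Rightarrow> 'a::banach"
  assumes bound: "\<And>l. l \<ge> L \<Longrightarrow> norm (q l) \<le> C * r ^ l" and "0 < r" "r < 1" "r < r'"
  shows "eventually (\<lambda>j. norm (\<Sum>n. q (j + n)) < r' ^ j) sequentially"
proof -
  have tail: "norm (\<Sum>n. q (j + n)) \<le> 0 + C / (1 - r) * r ^ j" if "j \<ge> L" for j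
  proof -
    have "norm (q (j + n)) \<le> C * r ^ j * r ^ n" for n
      using bound[of "j + n"] that by (simp add: power_add mult.assoc)
    hence "norm (\<Sum>n. q (j + n)) \<le> (\<Sum>n. C * r ^ j * r ^ n)"
      using \<open>0 < r\<close> \<open>r < 1\<close> by (intro norm_suminf_le summable_mult summable_geometric) auto
    also have "\<dots> = 0 + C / (1 - r) * r ^ j"
      using \<open>0 < r\<close> \<open>r < 1\<close> by (simp add: suminf_mult suminf_geometric)
    finally show ?thesis .
  qed
  have "eventually (\<lambda>j. 0 + C / (1 - r) * r ^ j < r' ^ j) sequentially"
    using assms by (intro eventually_affine_lt_power) auto
  thus ?thesis
    using eventually_ge_at_top[of L] by eventually_elim (metis tail le_less_trans)
qed

text \<open>Outside the limsup set of the envelope, \<open>|Q\<^sub>l f(x)| = O(2\<^sup>\<gamma>\<^sup>l)\<close>, which caps the growth rate of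
  \<open>P\<^sub>j f(x)\<close> (if \<open>\<beta> > 0\<close>) or the decay rate of \<open>R\<^sub>j f(x)\<close> (if \<open>\<beta> \<le> 0\<close>) strictly below \<open>\<beta>\<close>.\<close>

lemma Eminus_subset_envelope_limsup:
  fixes \<psi> :: "nat \<Rightarrow> ('n::finite) fn" and G :: "nat \<Rightarrow> real^'n \<Rightarrow> real"
  assumes bound: "\<And>l x. cmod (Qop \<psi> l f x) \<le> C * G l x" and "C \<ge> 0"
    and "\<gamma> < \<beta>" and "0 < \<beta> \<Longrightarrow> 0 < \<gamma>"
  shows "Eminus \<phi> \<psi> \<beta> f \<subseteq> {x. \<forall>L. \<exists>l\<ge>L. 2 powr (\<gamma> * real l) \<le> G l x}"
proof
  fix x assume x: "x \<in> Eminus \<phi> \<psi> \<beta> f"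
  show "x \<in> {x. \<forall>L. \<exists>l\<ge>L. 2 powr (\<gamma> * real l) \<le> G l x}"
  proof (rule ccontr)
    assume "x \<notin> {x. \<forall>L. \<exists>l\<ge>L. 2 powr (\<gamma> * real l) \<le> G l x}"
    then obtain L where "\<forall>l\<ge>L. \<not> 2 powr (\<gamma> * real l) \<le> G l x"
      by auto
    hence small: "\<And>l. l \<ge> L \<Longrightarrow> G l x < 2 powr (\<gamma> * real l)"
      by (simp add: not_le)
    have Q_small: "norm (Qop \<psi> l f x) \<le> C * (2 powr \<gamma>) ^ l" if "l \<ge> L" for l
      using order_trans[OF bound mult_left_mono[OF less_imp_le[OF small[OF that]] \<open>C \<ge> 0\<close>]]
      by (simp add: two_powr_power mult.commute)
    define g where "g = (\<gamma> + \<beta>) / 2"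
    have "2 powr \<gamma> < 2 powr g" and "g < \<beta>"
      using \<open>\<gamma> < \<beta>\<close> unfolding g_def by auto
    have rate_below_\<beta>: False
      if "\<And>j. V j \<ge> 0" "eventually (\<lambda>j. V j < (2 powr g) ^ j) sequentially"
        and "ereal \<beta> \<le> limsup (\<lambda>j. logE (V j) / ereal (real j * ln 2))" for V
      using order.trans[OF that(3) limsup_log_rate_le[OF that(1,2)]] \<open>g < \<beta>\<close> by simp
    show False
    proof (cases "\<beta> > 0")
      case True
      hence "1 < 2 powr \<gamma>"
        using assms(4) by simp
      show False
      proof (rule rate_below_\<beta>[of "\<lambda>j. cmod (Pop \<phi> \<psi> j f x)"])
        show "eventually (\<lambda>j. cmod (Pop \<phi> \<psi> j f x) < (2 powr g) ^ j) sequentially"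
          unfolding Pop_def
          using partial_sums_eventually_lt_power[OF Q_small \<open>1 < 2 powr \<gamma>\<close> \<open>2 powr \<gamma> < 2 powr g\<close>] .
      qed (use x True in \<open>simp_all add: Eminus_def\<close>)
    next
      case False
      hence "2 powr \<gamma> < 1"
        using \<open>\<gamma> < \<beta>\<close> by (intro powr_less_one) auto
      show False
      proof (rule rate_below_\<beta>[of "\<lambda>j. cmod (Rop \<psi> j f x)"])
        show "eventually (\<lambda>j. cmod (Rop \<psi> j f x) < (2 powr g) ^ j) sequentially"
          unfolding Rop_def
          using tail_sums_eventually_lt_power[OF Q_small _ \<open>2 powr \<gamma> < 1\<close> \<open>2 powr \<gamma> < 2 powr g\<close>] by simp
      qed (use x False in \<open>simp_all add: Eminus_def\<close>)
    qed
  qed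
qed

lemma hausdorff_measure_Eminus_eq_0:
  fixes \<phi> :: "('n::finite) fn" and \<psi> :: "nat \<Rightarrow> 'n fn"
  assumes decay: "\<forall>i\<in>wav_index TYPE('n). fast_decay (\<psi> i)"
    and f: "f \<in> besov_inf \<phi> \<psi> s p" and "p > 0" and "\<beta> \<noteq> 0"
    and "t > 0" and t: "t > real CARD('n) - s * p - \<beta> * p"
  shows "hausdorff_measure t (Eminus \<phi> \<psi> \<beta> f) = 0"
proof -
  let ?I = "wav_index TYPE('n)"
  let ?a = "\<lambda>l i k. cmod (wav_coef \<psi> f i l k)"
  have "(2::nat) ^ CARD('n) \<ge> 2"
    using power_increasing[of 1 "CARD('n)" "2::nat"] by simp
  hence "finite ?I" and "?I \<noteq> {}"
    by (auto simp: wav_index_def)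
  obtain B where "B \<ge> 0"
    and summable: "\<And>l. (\<lambda>(i, k). ?a l i k powr p) summable_on (?I \<times> UNIV)"
    and level_sum: "\<And>l. (\<Sum>\<^sub>\<infinity>(i, k)\<in>?I \<times> UNIV. ?a l i k powr p)
                       \<le> B powr p * 2 powr ((real CARD('n) - s * p) * real l)"
    and coefficient: "\<And>l i k. i \<in> ?I \<Longrightarrow> ?a l i k \<le> B * 2 powr ((real CARD('n) - s * p) / p * real l)"
    using besov_coefficient_bounds[OF f \<open>p > 0\<close>] by blast
  define \<gamma> where "\<gamma> = \<beta> - min ((t - (real CARD('n) - s * p - \<beta> * p)) / p / 2) (\<bar>\<beta>\<bar> / 2)"
  have "\<gamma> < \<beta>" and "0 < \<beta> \<Longrightarrow> 0 < \<gamma>"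
    using \<open>\<beta> \<noteq> 0\<close> t \<open>p > 0\<close> unfolding \<gamma>_def by auto
  have "\<gamma> \<ge> \<beta> - (t - (real CARD('n) - s * p - \<beta> * p)) / p / 2"
    unfolding \<gamma>_def by linarith
  hence rate: "real CARD('n) - s * p - \<gamma> * p < t"
    using t \<open>p > 0\<close> by (simp add: field_simps)
  obtain C where "C \<ge> 0" and C: "\<forall>i\<in>?I. \<forall>y. cmod (\<psi> i y) \<le> C * lattice_weight y powr (- (t / p + 2))"
    using uniform_lattice_weight_bound[OF \<open>finite ?I\<close> decay, of "t / p + 2"] \<open>t > 0\<close> \<open>p > 0\<close> by auto
  have "cmod (Qop \<psi> l f x) \<le> C * envelope (t / p + 2) ?I ?a l x" for l x
    using C coefficient \<open>t > 0\<close> \<open>p > 0\<close> by (intro norm_Qop_le_envelope) auto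
  hence "Eminus \<phi> \<psi> \<beta> f \<subseteq> {x. \<forall>L. \<exists>l\<ge>L. 2 powr (\<gamma> * real l) \<le> envelope (t / p + 2) ?I ?a l x}"
    by (rule Eminus_subset_envelope_limsup) fact+
  hence "hausdorff_measure t (Eminus \<phi> \<psi> \<beta> f)
      \<le> hausdorff_measure t {x. \<forall>L. \<exists>l\<ge>L. 2 powr (\<gamma> * real l) \<le> envelope (t / p + 2) ?I ?a l x}"
    by (rule hausdorff_measure_mono)
  also have "\<dots> = 0"
    by (rule hausdorff_measure_envelope_limsup_eq_0[where B = B and \<sigma> = "real CARD('n) - s * p"])
       (use \<open>finite ?I\<close> \<open>?I \<noteq> {}\<close> \<open>t > 0\<close> \<open>p > 0\<close> \<open>B \<ge> 0\<close> summable level_sum coefficient rate in auto)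
  finally show ?thesis
    by simp
qed

theorem proposition3p1:
  fixes V :: "int \<Rightarrow> ('n::finite) fn set"
    and \<phi> :: "'n fn" and \<psi> :: "nat \<Rightarrow> 'n fn"
    and s p \<beta> :: real and f :: "'n fn"
  assumes "orth_MRA_wavelets V \<phi> \<psi>"
    and "smooth_decay (nat \<lfloor>s\<rfloor> + 1) \<phi>"
    and "\<forall>i\<in>wav_index TYPE('n). smooth_decay (nat \<lfloor>s\<rfloor> + 1) (\<psi> i)"
    and "s \<ge> 0" and "p \<ge> 1"
    and "- s \<le> \<beta>" and "\<beta> \<le> real CARD('n) / p - s" and "\<beta> \<noteq> 0"
    and "f \<in> besov_inf \<phi> \<psi> s p"
  shows "hausdorff_dim (Eminus \<phi> \<psi> \<beta> f) \<le> real CARD('n) - s * p - \<beta> * p"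
proof (rule hausdorff_dim_le)
  \<comment> \<open>Only the decay of the wavelets enters.\<close>
  have "\<beta> * p \<le> (real CARD('n) / p - s) * p"
    using assms(5,7) by (intro mult_right_mono) auto
  also have "\<dots> = real CARD('n) - s * p"
    using assms(5) by (simp add: field_simps)
  finally show "real CARD('n) - s * p - \<beta> * p \<ge> 0"
    by simp
  fix t assume "t > real CARD('n) - s * p - \<beta> * p"
  with \<open>real CARD('n) - s * p - \<beta> * p \<ge> 0\<close> show "hausdorff_measure t (Eminus \<phi> \<psi> \<beta> f) = 0"
    using assms(3,5,8,9) smooth_decay_imp_fast_decay
    by (intro hausdorff_measure_Eminus_eq_0) auto
qed

end
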